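(* Let $M, K, P, N$ be positive integers with $1 < M \le K \le P$. Then there exists a matrix $\mathbf{A} \in \mathbb{R}^{M \times N}$ such that every matrix $\mathbf{F} \in \mathbb{R}^{P \times N}$ with the property that, for every set $\chi \subseteq \{1,\ldots,P\}$ with $|\chi| = K$, the rows of $\mathbf{F}$ indexed by $\chi$ span all the rows of $\mathbf{A}$, has average row sparsity satisfying $$\bar{s} > \frac{N}{P}(P-K+M) - \frac{M^2}{P}\binom{P}{K-M+1}.$$ Moreover, if $N$ is sufficiently large that $M^2\binom{P}{K-M+1} = o(N)$, then $$\bar{s} > \frac{N}{P}(P-K+M) - o\!\left(\frac{N}{P}\right).$$
   Context: The sparsity of a vector is its number of nonzero entries; $\bar{s} = \frac{1}{P}\sum_{i=1}^P \|\mathbf{f}_i\|_0$, where $\mathbf{f}_i^T$ is the $i$-th row of $\mathbf{F}$ and $\|\cdot\|_0$ counts nonzero entries. *)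

theory Defs
  imports Complex_Main "HOL-Library.Landau_Symbols"
begin

(* Matrices are functions nat => nat => real; an M x N matrix uses rows 0..<M, columns 0..<N.
   Row index set {1..P} of the paper is rendered as {0..<P}. *)

definition row_sparsity :: "(nat \<Rightarrow> nat \<Rightarrow> real) \<Rightarrow> nat \<Rightarrow> nat \<Rightarrow> nat" where
  "row_sparsity F N p = card {j. j < N \<and> F p j \<noteq> 0}"

definition avg_sparsity :: "(nat \<Rightarrow> nat \<Rightarrow> real) \<Rightarrow> nat \<Rightarrow> nat \<Rightarrow> real" where
  "avg_sparsity F P N = (\<Sum>p<P. real (row_sparsity F N p)) / real P"

definition rows_span :: "(nat \<Rightarrow> nat \<Rightarrow> real) \<Rightarrow> nat set \<Rightarrow> (nat \<Rightarrow> nat \<Rightarrow> real) \<Rightarrow> nat \<Rightarrow> nat \<Rightarrow> bool" where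
  "rows_span F chi A M N = (\<forall>i<M. \<exists>c :: nat \<Rightarrow> real. \<forall>j<N. A i j = (\<Sum>p\<in>chi. c p * F p j))"

definition K_recovers :: "(nat \<Rightarrow> nat \<Rightarrow> real) \<Rightarrow> (nat \<Rightarrow> nat \<Rightarrow> real) \<Rightarrow> nat \<Rightarrow> nat \<Rightarrow> nat \<Rightarrow> nat \<Rightarrow> bool" where
  "K_recovers A F M K P N = (\<forall>chi. chi \<subseteq> {..<P} \<and> card chi = K \<longrightarrow> rows_span F chi A M N)"

end

theory Submission
  imports Defs "HOL-Library.Function_Algebras" "HOL-Computational_Algebra.Polynomial"
begin

text \<open>Take for \<open>A\<close> the Vandermonde matrix \<open>A i j = j ^ i\<close>: any \<open>M\<close> of its columns are
  linearly independent. If \<open>F\<close> vanishes on \<open>K - M + 1\<close> rows \<open>T\<close> at \<open>M\<close> columns, then adding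
  \<open>M - 1\<close> further rows gives a \<open>K\<close>-set whose rows span \<open>A\<close>, although on those columns only
  the \<open>M - 1\<close> added rows contribute, which is impossible. So every \<open>(K - M + 1)\<close>-set of rows
  vanishes simultaneously on at most \<open>M - 1\<close> columns, and by the union bound at most
  \<open>(M - 1) * (P choose (K - M + 1))\<close> columns have \<open>K - M + 1\<close> or more zeros. Every other
  column has at least \<open>P - K + M\<close> nonzero entries, and every column has at least
  \<open>P - K + 1\<close>, because the constant first row of \<open>A\<close> is spanned by any \<open>K\<close> rows of \<open>F\<close>.
  Counting the nonzero entries of \<open>F\<close> column by column gives the bound.\<close>

context vector_space
begin

lemma card_le_card_if_scalars_zero_span:
  assumes "finite I" "finite T"
    and scalars_zero: "\<And>c. (\<Sum>i\<in>I. c i *s v i) = 0 \<Longrightarrow> \<forall>i\<in>I. c i = 0"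
    and "v ` I \<subseteq> span T"
  shows "card I \<le> card T"
proof -
  have inj: "inj_on v I"
  proof (rule inj_onI, rule ccontr)
    fix i k assume ik: "i \<in> I" "k \<in> I" "v i = v k" "i \<noteq> k"
    define c :: "_ \<Rightarrow> 'a" where "c x = (if x = i then 1 else if x = k then - 1 else 0)" for x
    have "(\<Sum>x\<in>I. c x *s v x) = (\<Sum>x\<in>{i, k}. c x *s v x)"
      using ik \<open>finite I\<close> by (intro sum.mono_neutral_right) (auto simp: c_def)
    also have "\<dots> = 0"
      using ik by (simp add: c_def scale_minus_left)
    finally show False
      using scalars_zero[of c] ik by (auto simp: c_def)
  qed
  have "independent (v ` I)"
  proof (rule independent_if_scalars_zero)
    fix f x assume "(\<Sum>x\<in>v ` I. f x *s x) = 0" "x \<in> v ` I"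
    then show "f x = 0"
      using scalars_zero[of "f \<circ> v"] by (auto simp: sum.reindex[OF inj])
  qed (use \<open>finite I\<close> in simp)
  then have "card (v ` I) \<le> card T"
    using independent_span_bound assms(2,4) by blast
  then show ?thesis
    using card_image[OF inj] by simp
qed

end

lemma sum_powers_eq_zero_imp_coeffs_zero:
  fixes c :: "nat \<Rightarrow> real"
  assumes "finite J" "M \<le> card J" "\<And>j. j \<in> J \<Longrightarrow> (\<Sum>i<M. c i * real j ^ i) = 0"
  shows "\<forall>i<M. c i = 0"
proof -
  define p where "p = (\<Sum>i<M. monom (c i) i)"
  have coeff_p: "coeff p k = (if k < M then c k else 0)" for k
    unfolding p_def coeff_sum coeff_monom by (auto simp: sum.delta)
  have "p = 0"
  proof (rule ccontr)
    assume "p \<noteq> 0"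
    then have "0 < M"
      unfolding p_def by (cases M) auto
    have "real ` J \<subseteq> {x. poly p x = 0}"
      using assms(3) by (auto simp: p_def poly_sum poly_monom)
    then have "card (real ` J) \<le> card {x. poly p x = 0}"
      using poly_roots_finite[OF \<open>p \<noteq> 0\<close>] by (rule card_mono[rotated])
    also have "\<dots> \<le> degree p"
      using card_poly_roots_bound[OF \<open>p \<noteq> 0\<close>] .
    also have "\<dots> < M"
      using \<open>0 < M\<close> by (intro degree_lessI) (auto simp: coeff_p)
    finally show False
      using assms(2) card_image[of real J] by (simp add: inj_on_def)
  qed
  then show ?thesis
    using coeff_p by (metis coeff_0)
qed

interpretation real_fun: vector_space "\<lambda>(c :: real) (f :: nat \<Rightarrow> real) j. c * f j"
  by unfold_locales (auto simp: algebra_simps fun_eq_iff)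

lemma sum_fun_apply: "(\<Sum>x\<in>A. f x) (j :: nat) = (\<Sum>x\<in>A. f x j :: real)"
  by (induction A rule: infinite_finite_induct) auto

lemma card_ge_if_powers_in_span:
  fixes G c :: "nat \<Rightarrow> nat \<Rightarrow> real"
  assumes "finite J" "M \<le> card J" "finite R"
    and powers: "\<And>i j. i < M \<Longrightarrow> j \<in> J \<Longrightarrow> real j ^ i = (\<Sum>r\<in>R. c i r * G r j)"
  shows "M \<le> card R"
proof -
  define pow where "pow i j = (if j \<in> J then real j ^ i else 0)" for i j
  define g where "g r j = (if j \<in> J then G r j else 0)" for r j
  have "card {..<M} \<le> card (g ` R)"
  proof (rule real_fun.card_le_card_if_scalars_zero_span)
    fix a assume combination: "(\<Sum>i\<in>{..<M}. (\<lambda>j. a i * pow i j)) = 0"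
    have "(\<Sum>i<M. a i * real j ^ i) = 0" if "j \<in> J" for j
      using fun_cong[OF combination, of j] that by (simp add: sum_fun_apply pow_def)
    then show "\<forall>i\<in>{..<M}. a i = 0"
      using sum_powers_eq_zero_imp_coeffs_zero assms(1,2) by blast
  next
    have "pow i \<in> real_fun.span (g ` R)" if "i < M" for i
    proof -
      have "pow i = (\<Sum>r\<in>R. (\<lambda>j. c i r * g r j))"
        using powers that by (auto simp: fun_eq_iff sum_fun_apply pow_def g_def)
      then show ?thesis
        by (simp only:) (intro real_fun.span_sum real_fun.span_scale real_fun.span_base imageI)
    qed
    then show "pow ` {..<M} \<subseteq> real_fun.span (g ` R)"
      by blast
  qed (use \<open>finite R\<close> in auto)
  then show ?thesis
    using card_image_le[OF \<open>finite R\<close>, of g] by simp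
qed

definition vandermonde :: "nat \<Rightarrow> nat \<Rightarrow> real" where
  "vandermonde i j = real j ^ i"

definition zero_rows :: "(nat \<Rightarrow> nat \<Rightarrow> real) \<Rightarrow> nat \<Rightarrow> nat \<Rightarrow> nat set" where
  "zero_rows F P j = {p. p < P \<and> F p j = 0}"

lemma finite_zero_rows: "finite (zero_rows F P j)"
  by (simp add: zero_rows_def)

lemma zero_rows_subset: "zero_rows F P j \<subseteq> {..<P}"
  by (auto simp: zero_rows_def)

lemma card_zero_rows_less:
  assumes "K_recovers A F M K P N" "i < M" "j < N" "A i j \<noteq> 0"
  shows "card (zero_rows F P j) < K"
proof (rule ccontr)
  assume "\<not> card (zero_rows F P j) < K"
  then obtain chi where chi: "chi \<subseteq> zero_rows F P j" "card chi = K"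
    by (meson not_less obtain_subset_with_card_n)
  then have "rows_span F chi A M N"
    using assms(1) zero_rows_subset unfolding K_recovers_def by blast
  then obtain c where "A i j = (\<Sum>p\<in>chi. c p * F p j)"
    using assms(2,3) unfolding rows_span_def by blast
  also have "\<dots> = 0"
    using chi(1) by (intro sum.neutral) (auto simp: zero_rows_def)
  finally show False
    using assms(4) by contradiction
qed

lemma card_common_zero_columns_less:
  assumes recovers: "K_recovers vandermonde F M K P N"
    and "0 < M" "M \<le> K" "K \<le> P" and T: "T \<subseteq> {..<P}" "card T = K - M + 1"
  shows "card {j. j < N \<and> T \<subseteq> zero_rows F P j} < M"
proof (rule ccontr)
  define J where "J = {j. j < N \<and> T \<subseteq> zero_rows F P j}"
  assume "\<not> card J < M"
  have "finite T"
    using T(1) finite_subset by blast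
  have "M - 1 \<le> card ({..<P} - T)"
    using T assms(2-4) \<open>finite T\<close> by (simp add: card_Diff_subset)
  then obtain R where R: "R \<subseteq> {..<P} - T" "card R = M - 1"
    by (rule obtain_subset_with_card_n)
  have "finite R"
    using R(1) finite_subset by blast
  have "card (T \<union> R) = K"
    using R T assms(2,3) \<open>finite T\<close> \<open>finite R\<close> by (subst card_Un_disjoint) auto
  then have "rows_span F (T \<union> R) vandermonde M N"
    using recovers R(1) T(1) unfolding K_recovers_def by blast
  then obtain c where c: "\<And>i j. i < M \<Longrightarrow> j < N \<Longrightarrow> real j ^ i = (\<Sum>p\<in>T \<union> R. c i p * F p j)"
    unfolding rows_span_def vandermonde_def by metis
  have "real j ^ i = (\<Sum>r\<in>R. c i r * F r j)" if "i < M" "j \<in> J" for i j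
  proof -
    have "real j ^ i = (\<Sum>p\<in>T. c i p * F p j) + (\<Sum>p\<in>R. c i p * F p j)"
    proof -
      have "T \<inter> R = {}"
        using R(1) by blast
      then show ?thesis
        using c[of i j] that \<open>finite T\<close> \<open>finite R\<close> by (simp add: J_def sum.union_disjoint)
    qed
    moreover have "(\<Sum>p\<in>T. c i p * F p j) = 0"
      using that(2) by (intro sum.neutral) (auto simp: J_def zero_rows_def)
    ultimately show ?thesis
      by simp
  qed
  moreover have "finite J" "M \<le> card J"
    using \<open>\<not> card J < M\<close> by (simp_all add: J_def)
  ultimately have "M \<le> card R"
    using card_ge_if_powers_in_span[of J M R c F] \<open>finite R\<close> by blast
  then show False
    using R(2) \<open>0 < M\<close> by simp
qed

lemma card_columns_with_many_zeros_le:
  assumes "K_recovers vandermonde F M K P N" "0 < M" "M \<le> K" "K \<le> P"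
  shows "card {j. j < N \<and> K - M + 1 \<le> card (zero_rows F P j)} \<le> (M - 1) * (P choose (K - M + 1))"
proof -
  define Ts where "Ts = {T. T \<subseteq> {..<P} \<and> card T = K - M + 1}"
  define J where "J T = {j. j < N \<and> T \<subseteq> zero_rows F P j}" for T
  have "finite Ts"
    unfolding Ts_def by (rule finite_subset[of _ "Pow {..<P}"]) auto
  have "{j. j < N \<and> K - M + 1 \<le> card (zero_rows F P j)} \<subseteq> (\<Union>T\<in>Ts. J T)"
  proof
    fix j assume "j \<in> {j. j < N \<and> K - M + 1 \<le> card (zero_rows F P j)}"
    then obtain T where "T \<subseteq> zero_rows F P j" "card T = K - M + 1" "j < N"
      by (auto elim: obtain_subset_with_card_n)
    then show "j \<in> (\<Union>T\<in>Ts. J T)"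
      using zero_rows_subset[of F P j] unfolding Ts_def J_def by blast
  qed
  then have "card {j. j < N \<and> K - M + 1 \<le> card (zero_rows F P j)} \<le> card (\<Union>T\<in>Ts. J T)"
    using \<open>finite Ts\<close> by (intro card_mono) (auto simp: J_def)
  also have "\<dots> \<le> (\<Sum>T\<in>Ts. card (J T))"
    using card_UN_le[OF \<open>finite Ts\<close>] .
  also have "\<dots> \<le> (\<Sum>T\<in>Ts. M - 1)"
  proof (rule sum_mono)
    fix T assume "T \<in> Ts"
    then show "card (J T) \<le> M - 1"
      using card_common_zero_columns_less[OF assms, of T] unfolding Ts_def J_def by simp
  qed
  also have "\<dots> = (M - 1) * (P choose (K - M + 1))"
    using n_subsets[of "{..<P}" "K - M + 1"] by (simp add: Ts_def)
  finally show ?thesis .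
qed

lemma card_lessThan_filter_eq_sum:
  "card {i. i < (n :: nat) \<and> Q i} = (\<Sum>i<n. if Q i then 1 else 0)"
  using sum.inter_filter[of "{..<n}" "\<lambda>_. 1 :: nat" Q] by simp

lemma sum_row_sparsity_eq_sum_nonzeros_per_column:
  "(\<Sum>p<P. row_sparsity F N p) = (\<Sum>j<N. P - card (zero_rows F P j))"
proof -
  have "(\<Sum>p<P. row_sparsity F N p) = (\<Sum>p<P. \<Sum>j<N. if F p j \<noteq> 0 then 1 else 0)"
    by (simp add: row_sparsity_def card_lessThan_filter_eq_sum)
  also have "\<dots> = (\<Sum>j<N. \<Sum>p<P. if F p j \<noteq> 0 then 1 else 0)"
    by (rule sum.swap)
  also have "\<dots> = (\<Sum>j<N. card ({..<P} - zero_rows F P j))"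
  proof -
    have "{..<P} - zero_rows F P j = {p. p < P \<and> F p j \<noteq> 0}" for j
      by (auto simp: zero_rows_def)
    then show ?thesis
      by (simp add: card_lessThan_filter_eq_sum)
  qed
  also have "\<dots> = (\<Sum>j<N. P - card (zero_rows F P j))"
    by (simp add: card_Diff_subset finite_zero_rows zero_rows_subset)
  finally show ?thesis .
qed

lemma sum_row_sparsity_lower_bound:
  assumes recovers: "K_recovers vandermonde F M K P N" and "0 < M" "M \<le> K" "K \<le> P"
  shows "N * (P - K + M)
    \<le> (\<Sum>p<P. row_sparsity F N p) + (M - 1) * ((M - 1) * (P choose (K - M + 1)))"
proof -
  define many_zeros where "many_zeros j \<longleftrightarrow> K - M + 1 \<le> card (zero_rows F P j)" for j
  have column: "P - K + M \<le> (P - card (zero_rows F P j)) + (M - 1) * (if many_zeros j then 1 else 0)"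
    if "j < N" for j
  proof -
    have "card (zero_rows F P j) < K"
      using card_zero_rows_less[OF recovers \<open>0 < M\<close> that] by (simp add: vandermonde_def)
    then show ?thesis
      using assms(2-4) by (auto simp: many_zeros_def)
  qed
  have "N * (P - K + M) = (\<Sum>j<N. P - K + M)"
    by simp
  also have "\<dots> \<le> (\<Sum>j<N. (P - card (zero_rows F P j)) + (M - 1) * (if many_zeros j then 1 else 0))"
    using column by (intro sum_mono) simp
  also have "\<dots> = (\<Sum>p<P. row_sparsity F N p) + (M - 1) * card {j. j < N \<and> many_zeros j}"
    by (simp add: sum.distrib sum_distrib_left card_lessThan_filter_eq_sum
        sum_row_sparsity_eq_sum_nonzeros_per_column)
  also have "\<dots> \<le> (\<Sum>p<P. row_sparsity F N p) + (M - 1) * ((M - 1) * (P choose (K - M + 1)))"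
    using card_columns_with_many_zeros_le[OF assms] by (simp add: many_zeros_def)
  finally show ?thesis .
qed

lemma avg_sparsity_gt_if_recovers_vandermonde:
  assumes "K_recovers vandermonde F M K P N" "1 < M" "M \<le> K" "K \<le> P"
  shows "avg_sparsity F P N > real N / real P * (real P - real K + real M)
           - real M ^ 2 / real P * real (P choose (K - M + 1))"
proof -
  define S where "S = (\<Sum>p<P. real (row_sparsity F N p))"
  define C where "C = real (P choose (K - M + 1))"
  have "1 \<le> C"
    using assms(2-4) by (simp add: C_def Suc_leI zero_less_binomial)
  have "real (N * (P - K + M))
      \<le> real ((\<Sum>p<P. row_sparsity F N p) + (M - 1) * ((M - 1) * (P choose (K - M + 1))))"
    using sum_row_sparsity_lower_bound[OF assms(1) _ assms(3,4)] assms(2) by (simp only: of_nat_le_iff)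
  moreover have "real (P - K + M) = real P - real K + real M" "real (M - 1) = real M - 1"
    using assms(2-4) by (simp_all add: of_nat_diff)
  ultimately have "real N * (real P - real K + real M) \<le> S + (real M - 1) ^ 2 * C"
    unfolding S_def C_def power2_eq_square by (simp only: of_nat_add of_nat_mult of_nat_sum mult.assoc)
  moreover have "(real M - 1) ^ 2 * C < real M ^ 2 * C"
    using \<open>1 \<le> C\<close> assms(2) by (intro mult_strict_right_mono power_strict_mono) auto
  ultimately have "real N * (real P - real K + real M) - real M ^ 2 * C < S"
    by linarith
  moreover have "0 < real P"
    using assms(2-4) by simp
  ultimately have "(real N * (real P - real K + real M) - real M ^ 2 * C) / real P < S / real P"
    by (rule divide_strict_right_mono)
  then show ?thesis
    using \<open>0 < real P\<close> unfolding avg_sparsity_def S_def[symmetric] C_def[symmetric]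
    by (simp add: diff_divide_distrib)
qed

theorem theorem3:
  shows "(\<forall>M K P N :: nat. 0 < N \<and> 1 < M \<and> M \<le> K \<and> K \<le> P \<longrightarrow>
      (\<exists>A. \<forall>F. K_recovers A F M K P N \<longrightarrow>
         avg_sparsity F P N > real N / real P * (real P - real K + real M)
           - real M ^ 2 / real P * real (P choose (K - M + 1))))
   \<and>
   (\<forall>Ms Ks Ps :: nat \<Rightarrow> nat.
      (\<forall>N>0. 1 < Ms N \<and> Ms N \<le> Ks N \<and> Ks N \<le> Ps N) \<and>
      (\<lambda>N. real (Ms N) ^ 2 * real (Ps N choose (Ks N - Ms N + 1))) \<in> o(\<lambda>N. real N)
      \<longrightarrow>
      (\<exists>(As :: nat \<Rightarrow> nat \<Rightarrow> nat \<Rightarrow> real) (g :: nat \<Rightarrow> real).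
         g \<in> o(\<lambda>N. real N / real (Ps N)) \<and>
         (\<forall>N>0. \<forall>F. K_recovers (As N) F (Ms N) (Ks N) (Ps N) N \<longrightarrow>
            avg_sparsity F (Ps N) N > real N / real (Ps N) * (real (Ps N) - real (Ks N) + real (Ms N)) - g N)))"
proof (intro conjI allI impI, goal_cases)
  case (1 M K P N)
  then show ?case
    by (intro exI[of _ vandermonde] allI impI avg_sparsity_gt_if_recovers_vandermonde) auto
next
  case (2 Ms Ks Ps)
  then have bounds: "\<And>N. 0 < N \<Longrightarrow> 1 < Ms N \<and> Ms N \<le> Ks N \<and> Ks N \<le> Ps N"
    by blast
  define g where "g N = real (Ms N) ^ 2 / real (Ps N) * real (Ps N choose (Ks N - Ms N + 1))" for N
  have "eventually (\<lambda>N. real (Ps N) \<noteq> 0) at_top"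
  proof (rule eventually_at_top_linorderI)
    fix N :: nat assume "1 \<le> N"
    then show "real (Ps N) \<noteq> 0"
      using bounds[of N] by simp
  qed
  then have "g \<in> o(\<lambda>N. real N / real (Ps N))"
    using 2 unfolding g_def times_divide_eq_left by (intro landau_o.small.divide_right) blast+
  then show ?case
    using bounds avg_sparsity_gt_if_recovers_vandermonde
    by (intro exI[of _ "\<lambda>_. vandermonde"] exI[of _ g] conjI allI impI) (auto simp only: g_def)
qed

end
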